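(* Let $\sigma_1$ and $\sigma_2$ be compositions of the positive integers $m_1$ and $m_2$ respectively. If $\Gamma(\mathsf{hypo},\sigma_1)$ and $\Gamma(\mathsf{hypo},\sigma_2)$ are isomorphic as unlabelled directed graphs, then $m_1=m_2$.
   Context: A quasi-ribbon tableau of shape $\sigma=(\sigma_1,\dots,\sigma_r)$ (a composition) is a filling with positive integers of the diagram having $\sigma_i$ cells in row $i$, the leftmost cell of row $i+1$ directly below the rightmost cell of row $i$, with entries weakly increasing along rows and strictly increasing down columns. Its column reading is the word obtained by reading columns left to right, each column bottom to top. Quasi-Kashiwara operator $f_i$ ($i\ge1$) on a word $u$ over the positive integers: undefined if $u$ contains a (not necessarily consecutive) subsequence $(i+1)\,i$ or contains no letter $i$; otherwise $f_i(u)$ replaces the rightmost $i$ by $i+1$. $\Gamma(\mathsf{hypo},\sigma)$ is the directed graph whose vertices are the quasi-ribbon tableaux of shape $\sigma$ (identified with their column readings), with an edge $u\to f_i(u)$ labelled $i$ whenever $f_i(u)$ is defined. *)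

theory Defs
  imports Main
begin

definition is_composition :: "nat list \<Rightarrow> nat \<Rightarrow> bool" where
  "is_composition \<sigma> m \<longleftrightarrow> (\<forall>x\<in>set \<sigma>. 0 < x) \<and> sum_list \<sigma> = m"

text \<open>Row i (0-based) of the quasi-ribbon diagram starts in column row_start; each row
  begins directly below the last cell of the previous row.\<close>
definition row_start :: "nat list \<Rightarrow> nat \<Rightarrow> nat" where
  "row_start \<sigma> i = (\<Sum>k<i. \<sigma> ! k - 1)"

definition qr_cells :: "nat list \<Rightarrow> (nat \<times> nat) set" where
  "qr_cells \<sigma> = {(i, j). i < length \<sigma> \<and> row_start \<sigma> i \<le> j \<and> j < row_start \<sigma> i + \<sigma> ! i}"

definition qr_width :: "nat list \<Rightarrow> nat" where
  "qr_width \<sigma> = (\<Sum>k<length \<sigma>. \<sigma> ! k - 1) + 1"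

definition is_qrt :: "nat list \<Rightarrow> (nat \<times> nat \<Rightarrow> nat) \<Rightarrow> bool" where
  "is_qrt \<sigma> T \<longleftrightarrow>
     (\<forall>c\<in>qr_cells \<sigma>. 0 < T c) \<and>
     (\<forall>i j. (i, j) \<in> qr_cells \<sigma> \<and> (i, Suc j) \<in> qr_cells \<sigma> \<longrightarrow> T (i, j) \<le> T (i, Suc j)) \<and>
     (\<forall>i j. (i, j) \<in> qr_cells \<sigma> \<and> (Suc i, j) \<in> qr_cells \<sigma> \<longrightarrow> T (i, j) < T (Suc i, j))"

definition col_reading :: "nat list \<Rightarrow> (nat \<times> nat \<Rightarrow> nat) \<Rightarrow> nat list" where
  "col_reading \<sigma> T =
     concat (map (\<lambda>j. map (\<lambda>i. T (i, j))
                         (rev (filter (\<lambda>i. (i, j) \<in> qr_cells \<sigma>) [0..<length \<sigma>])))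
                 [0..<qr_width \<sigma>])"

definition quasi_f :: "nat \<Rightarrow> nat list \<Rightarrow> nat list option" where
  "quasi_f i u =
     (if 1 \<le> i \<and> i \<in> set u \<and>
         \<not> (\<exists>p q. p < q \<and> q < length u \<and> u ! p = Suc i \<and> u ! q = i)
      then Some (u[(GREATEST k. k < length u \<and> u ! k = i) := Suc i])
      else None)"

definition hypo_vertices :: "nat list \<Rightarrow> nat list set" where
  "hypo_vertices \<sigma> = {col_reading \<sigma> T | T. is_qrt \<sigma> T}"

definition hypo_edges :: "nat list \<Rightarrow> (nat list \<times> nat list) set" where
  "hypo_edges \<sigma> = {(u, v). u \<in> hypo_vertices \<sigma> \<and> (\<exists>i\<ge>1. quasi_f i u = Some v)}"

definition digraph_iso :: "'a set \<Rightarrow> ('a \<times> 'a) set \<Rightarrow> 'b set \<Rightarrow> ('b \<times> 'b) set \<Rightarrow> bool" where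
  "digraph_iso V1 E1 V2 E2 \<longleftrightarrow>
     (\<exists>\<phi>. bij_betw \<phi> V1 V2 \<and>
          (\<forall>u\<in>V1. \<forall>v\<in>V1. (u, v) \<in> E1 \<longleftrightarrow> (\<phi> u, \<phi> v) \<in> E2))"

end

theory Submission
  imports Defs
begin

text \<open>The maximum out-degree of \<open>\<Gamma>(hypo, \<sigma>)\<close> is \<open>m\<close>, and it is an invariant of the unlabelled
  digraph. A vertex is a word of length \<open>m\<close>, and \<open>f\<^sub>i\<close> is only defined for letters \<open>i\<close> of the
  word, so there are at most \<open>m\<close> out-neighbours. Conversely, fill the tableau with pairwise
  distinct odd numbers increasing along rows and down columns: no letter \<open>i + 1\<close> occurs in its
  reading, so every \<open>f\<^sub>i\<close> with \<open>i\<close> a letter is defined, each bumps a different cell, and the bumped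
  filling is again a quasi-ribbon tableau because consecutive entries differ by at least 2.\<close>

definition out_nbrs :: "'a set \<Rightarrow> ('a \<times> 'a) set \<Rightarrow> 'a \<Rightarrow> 'a set" where
  "out_nbrs V E u = {v \<in> V. (u, v) \<in> E}"

definition out_degrees :: "'a set \<Rightarrow> ('a \<times> 'a) set \<Rightarrow> nat set" where
  "out_degrees V E = (\<lambda>u. card (out_nbrs V E u)) ` V"

lemma digraph_iso_out_degrees:
  assumes "digraph_iso V1 E1 V2 E2"
  shows "out_degrees V1 E1 = out_degrees V2 E2"
proof -
  obtain \<phi> where bij: "bij_betw \<phi> V1 V2"
    and edges: "\<forall>u\<in>V1. \<forall>v\<in>V1. (u, v) \<in> E1 \<longleftrightarrow> (\<phi> u, \<phi> v) \<in> E2"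
    using assms unfolding digraph_iso_def by blast
  have img: "\<phi> ` V1 = V2" and inj: "inj_on \<phi> V1"
    using bij by (auto simp: bij_betw_def)
  have nbrs: "out_nbrs V2 E2 (\<phi> u) = \<phi> ` out_nbrs V1 E1 u" if "u \<in> V1" for u
    using that edges img by (auto simp: out_nbrs_def)
  have "card (out_nbrs V2 E2 (\<phi> u)) = card (out_nbrs V1 E1 u)" if "u \<in> V1" for u
    unfolding nbrs[OF that]
    by (rule card_image, rule inj_on_subset[OF inj]) (auto simp: out_nbrs_def)
  then show ?thesis
    unfolding out_degrees_def img[symmetric] image_image by (intro image_cong) auto
qed

lemma list_update_eq_imp_eq_index:
  assumes "xs[k := x] = xs[l := y]" and "k < length xs" and "x \<noteq> xs ! k"
  shows "k = l"
  using assms by (metis nth_list_update_eq nth_list_update_neq)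

lemma map_fun_upd_distinct:
  assumes "distinct xs" and "k < length xs" and "xs ! k = c"
  shows "map (f(c := y)) xs = (map f xs)[k := y]"
proof (rule nth_equalityI)
  fix p assume "p < length (map (f(c := y)) xs)"
  then show "map (f(c := y)) xs ! p = (map f xs)[k := y] ! p"
    using assms nth_eq_iff_index_eq[OF assms(1), of p k] by auto
qed simp

lemma quasi_f_images_subset:
  "{v. \<exists>i. quasi_f i u = Some v} \<subseteq> (\<lambda>i. the (quasi_f i u)) ` set u"
proof
  fix v assume "v \<in> {v. \<exists>i. quasi_f i u = Some v}"
  then obtain i where i: "quasi_f i u = Some v"
    by blast
  then have "i \<in> set u"
    by (simp add: quasi_f_def split: if_splits)
  with i show "v \<in> (\<lambda>i. the (quasi_f i u)) ` set u"
    by force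
qed

lemma finite_quasi_f_images: "finite {v. \<exists>i. quasi_f i u = Some v}"
  using quasi_f_images_subset by (rule finite_subset) simp

lemma card_quasi_f_images_le: "card {v. \<exists>i. quasi_f i u = Some v} \<le> length u"
proof -
  have "card {v. \<exists>i. quasi_f i u = Some v} \<le> card ((\<lambda>i. the (quasi_f i u)) ` set u)"
    using quasi_f_images_subset by (rule card_mono[rotated]) simp
  also have "\<dots> \<le> length u"
    using card_image_le[of "set u"] card_length order_trans by blast
  finally show ?thesis .
qed

lemma quasi_f_distinct:
  assumes "distinct u" and "k < length u" and "u ! k = i" and "1 \<le> i" and "Suc i \<notin> set u"
  shows "quasi_f i u = Some (u[k := Suc i])"
proof -
  have "(GREATEST l. l < length u \<and> u ! l = i) = k"
    using assms(1-3) by (intro Greatest_equality) (auto simp: nth_eq_iff_index_eq)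
  moreover have "\<not> (\<exists>p q. p < q \<and> q < length u \<and> u ! p = Suc i \<and> u ! q = i)"
    using assms(5) by (metis nth_mem order.strict_trans)
  ultimately show ?thesis
    using assms(2-4) nth_mem unfolding quasi_f_def by fastforce
qed

definition cells :: "nat list \<Rightarrow> (nat \<times> nat) list" where
  "cells \<sigma> = concat (map (\<lambda>j. map (\<lambda>i. (i, j))
                         (rev (filter (\<lambda>i. (i, j) \<in> qr_cells \<sigma>) [0..<length \<sigma>])))
                 [0..<qr_width \<sigma>])"

lemma col_reading_cells: "col_reading \<sigma> T = map T (cells \<sigma>)"
  unfolding col_reading_def cells_def by (simp add: map_concat comp_def rev_map)

lemma distinct_cells: "distinct (cells \<sigma>)"
proof -
  have "distinct (concat (map (\<lambda>j. map (\<lambda>i. (i, j)) (g j)) js))"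
    if "distinct js" and "\<forall>j. distinct (g j)" for js and g :: "nat \<Rightarrow> nat list"
    using that by (induction js) (auto simp: distinct_map inj_on_def)
  then show ?thesis
    unfolding cells_def by simp
qed

lemma qr_cells_Sigma:
  "qr_cells \<sigma> = (SIGMA i:{..<length \<sigma>}. {row_start \<sigma> i..<row_start \<sigma> i + \<sigma> ! i})"
  by (auto simp: qr_cells_def)

lemma qr_cells_col_less_width:
  assumes "(i, j) \<in> qr_cells \<sigma>"
  shows "j < qr_width \<sigma>"
proof -
  have i: "i < length \<sigma>" and j: "j < row_start \<sigma> i + \<sigma> ! i"
    using assms by (auto simp: qr_cells_def)
  have "row_start \<sigma> i + \<sigma> ! i \<le> (\<Sum>k<Suc i. \<sigma> ! k - 1) + 1"
    by (simp add: row_start_def)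
  also have "(\<Sum>k<Suc i. \<sigma> ! k - 1) \<le> (\<Sum>k<length \<sigma>. \<sigma> ! k - 1)"
    using i by (intro sum_mono2) auto
  finally show ?thesis
    using j by (simp add: qr_width_def)
qed

lemma set_cells: "set (cells \<sigma>) = qr_cells \<sigma>"
  unfolding cells_def using qr_cells_col_less_width by (fastforce simp: qr_cells_def)

lemma length_cells: "length (cells \<sigma>) = sum_list \<sigma>"
proof -
  have "card (qr_cells \<sigma>) = sum_list \<sigma>"
    by (simp add: qr_cells_Sigma sum_list_sum_nth atLeast0LessThan)
  then show ?thesis
    using distinct_card[OF distinct_cells] by (simp add: set_cells)
qed

lemma length_col_reading: "length (col_reading \<sigma> T) = sum_list \<sigma>"
  by (simp add: col_reading_cells length_cells)

lemma out_nbrs_hypo_subset: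
  "out_nbrs (hypo_vertices \<sigma>) (hypo_edges \<sigma>) u \<subseteq> {v. \<exists>i. quasi_f i u = Some v}"
  by (auto simp: out_nbrs_def hypo_edges_def)

lemma out_degrees_hypo_le:
  assumes "d \<in> out_degrees (hypo_vertices \<sigma>) (hypo_edges \<sigma>)"
  shows "d \<le> sum_list \<sigma>"
proof -
  obtain u where u: "u \<in> hypo_vertices \<sigma>"
    and d: "d = card (out_nbrs (hypo_vertices \<sigma>) (hypo_edges \<sigma>) u)"
    using assms by (auto simp: out_degrees_def)
  have "d \<le> length u"
    using card_mono[OF finite_quasi_f_images out_nbrs_hypo_subset] card_quasi_f_images_le d
    by (metis order_trans)
  with u show ?thesis
    by (auto simp: hypo_vertices_def length_col_reading)
qed

definition odd_filling :: "nat list \<Rightarrow> nat \<times> nat \<Rightarrow> nat" where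
  "odd_filling \<sigma> c = 2 * (fst c * qr_width \<sigma> + snd c) + 1"

lemma inj_on_odd_filling: "inj_on (odd_filling \<sigma>) (qr_cells \<sigma>)"
proof (rule inj_onI)
  fix x y assume x: "x \<in> qr_cells \<sigma>" and y: "y \<in> qr_cells \<sigma>"
    and eq: "odd_filling \<sigma> x = odd_filling \<sigma> y"
  let ?n = "\<lambda>c. fst c * qr_width \<sigma> + snd c"
  have "?n c div qr_width \<sigma> = fst c" and "?n c mod qr_width \<sigma> = snd c"
    if "c \<in> qr_cells \<sigma>" for c
    using qr_cells_col_less_width[of "fst c" "snd c" \<sigma>] that by simp_all
  moreover have "?n x = ?n y"
    using eq by (simp add: odd_filling_def)
  ultimately show "x = y"
    using x y by (metis prod_eq_iff)
qed

lemma is_qrt_near_odd_filling: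
  assumes "\<And>c. odd_filling \<sigma> c \<le> T c \<and> T c \<le> Suc (odd_filling \<sigma> c)"
  shows "is_qrt \<sigma> T"
proof -
  have "i * qr_width \<sigma> + qr_width \<sigma> \<le> i' * qr_width \<sigma>" if "i < i'" for i i'
    using mult_le_mono1[of "Suc i" i' "qr_width \<sigma>"] that by simp
  moreover have "0 < qr_width \<sigma>"
    by (simp add: qr_width_def)
  ultimately have gap: "Suc (Suc (odd_filling \<sigma> (i, j))) \<le> odd_filling \<sigma> (i', j')"
    if "i < i' \<and> j = j' \<or> i = i' \<and> j < j'" for i j i' j'
    using that by (fastforce simp: odd_filling_def)
  have "T (i, j) < T (i', j')" if "i < i' \<and> j = j' \<or> i = i' \<and> j < j'" for i j i' j'
    using gap[OF that] assms[of "(i, j)"] assms[of "(i', j')"] by linarith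
  moreover have "0 < T c" for c
    using assms[of c] by (simp add: odd_filling_def)
  ultimately show ?thesis
    unfolding is_qrt_def by (auto intro: less_imp_le)
qed

lemma out_degrees_hypo_attains:
  "sum_list \<sigma> \<in> out_degrees (hypo_vertices \<sigma>) (hypo_edges \<sigma>)"
proof -
  define w where "w = col_reading \<sigma> (odd_filling \<sigma>)"
  define bump where "bump k = w[k := Suc (w ! k)]" for k
  have "is_qrt \<sigma> (odd_filling \<sigma>)"
    by (rule is_qrt_near_odd_filling) simp
  then have w_vertex: "w \<in> hypo_vertices \<sigma>"
    unfolding w_def hypo_vertices_def by blast
  have w_distinct: "distinct w"
    unfolding w_def col_reading_cells
    using distinct_cells inj_on_odd_filling by (simp add: distinct_map set_cells)
  have w_odd: "odd x" if "x \<in> set w" for x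
    using that by (auto simp: w_def col_reading_cells odd_filling_def)
  have bump_nbr: "bump k \<in> out_nbrs (hypo_vertices \<sigma>) (hypo_edges \<sigma>) w"
    if k: "k < length w" for k
  proof -
    let ?c = "cells \<sigma> ! k"
    have pos: "1 \<le> w ! k"
      using w_odd[OF nth_mem[OF k]] by (simp add: odd_pos Suc_leI)
    have "bump k = col_reading \<sigma> ((odd_filling \<sigma>)(?c := Suc (odd_filling \<sigma> ?c)))"
      using k distinct_cells
      by (simp add: bump_def w_def col_reading_cells map_fun_upd_distinct length_cells)
    moreover have "is_qrt \<sigma> ((odd_filling \<sigma>)(?c := Suc (odd_filling \<sigma> ?c)))"
      by (rule is_qrt_near_odd_filling) simp
    ultimately have "bump k \<in> hypo_vertices \<sigma>"
      unfolding hypo_vertices_def by blast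
    moreover have "quasi_f (w ! k) w = Some (bump k)"
      unfolding bump_def using k w_distinct pos w_odd[OF nth_mem[OF k]] w_odd[of "Suc (w ! k)"]
      by (intro quasi_f_distinct) auto
    ultimately show ?thesis
      unfolding out_nbrs_def hypo_edges_def using w_vertex pos by blast
  qed
  have "inj_on bump {..<length w}"
    by (rule inj_onI) (auto simp: bump_def elim: list_update_eq_imp_eq_index)
  then have "length w = card (bump ` {..<length w})"
    by (simp add: card_image)
  also have "\<dots> \<le> card (out_nbrs (hypo_vertices \<sigma>) (hypo_edges \<sigma>) w)"
    using bump_nbr finite_subset[OF out_nbrs_hypo_subset finite_quasi_f_images]
    by (intro card_mono) auto
  finally have "sum_list \<sigma> \<le> card (out_nbrs (hypo_vertices \<sigma>) (hypo_edges \<sigma>) w)"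
    by (simp add: w_def length_col_reading)
  then show ?thesis
    using w_vertex out_degrees_hypo_le[of _ \<sigma>] unfolding out_degrees_def
    by (metis image_eqI order_antisym)
qed

lemma Max_out_degrees_hypo:
  "Max (out_degrees (hypo_vertices \<sigma>) (hypo_edges \<sigma>)) = sum_list \<sigma>"
proof (rule Max_eqI)
  show "finite (out_degrees (hypo_vertices \<sigma>) (hypo_edges \<sigma>))"
    using out_degrees_hypo_le by (blast intro: finite_subset[of _ "{..sum_list \<sigma>}"])
qed (use out_degrees_hypo_le out_degrees_hypo_attains in auto)

theorem corollary4p4:
  fixes \<sigma>1 \<sigma>2 :: "nat list" and m1 m2 :: nat
  assumes "0 < m1" and "0 < m2"
    and "is_composition \<sigma>1 m1" and "is_composition \<sigma>2 m2"
    and "digraph_iso (hypo_vertices \<sigma>1) (hypo_edges \<sigma>1) (hypo_vertices \<sigma>2) (hypo_edges \<sigma>2)"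
  shows "m1 = m2"
proof -
  have "m1 = Max (out_degrees (hypo_vertices \<sigma>1) (hypo_edges \<sigma>1))"
    using assms(3) by (simp add: is_composition_def Max_out_degrees_hypo)
  also have "\<dots> = Max (out_degrees (hypo_vertices \<sigma>2) (hypo_edges \<sigma>2))"
    using assms(5) by (simp add: digraph_iso_out_degrees)
  also have "\<dots> = m2"
    using assms(4) by (simp add: is_composition_def Max_out_degrees_hypo)
  finally show ?thesis .
qed

end
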